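(* Let $T$ be a reachable $\mathcal C_w$-maximal rigid module. For any $R,S\in\mathrm{add}(T)$ we have $Y_RY_S=q^{[R,S]}Y_{R\oplus S}$.
   Context: Setting: $\Lambda$ is the preprojective algebra of a finite connected quiver without oriented cycles with vertex set $I$, $w$ an element of the corresponding Weyl group with reduced expression $s_{i_r}\cdots s_{i_1}$, $\mathcal C_w$ the full subcategory of finite-dimensional $\Lambda$-modules that are quotients of finite direct sums of copies of $V_{\mathbf i}=\bigoplus_kV_k$, $V_k=\mathrm{soc}_{(i_k,\dots,i_1)}(\widehat I_{i_k})$ (where $\widehat I_i$ is the injective hull of the simple $S_i$ and $\mathrm{soc}_{(j_1,\dots,j_s)}(M)=M_s$, $M_0=0$, $M_p/M_{p-1}$ the sum of submodules of $M/M_{p-1}$ isomorphic to $S_{j_p}$). $[X,Y]=\dim\mathrm{Hom}_\Lambda(X,Y)$. A $\mathcal C_w$-maximal rigid module ($\mathrm{Ext}^1(T,T)=0$, and $X\in\mathcal C_w$, $\mathrm{Ext}^1(T\oplus X,X)=0$ imply $X\in\mathrm{add}T$) is $T=T_1\oplus\cdots\oplus T_r$ with pairwise non-isomorphic indecomposables, projective-injectives last; mutation replaces a non-projective $T_k$ by the unique indecomposable $T_k^*\not\cong T_k$ keeping maximal rigidity; reachable = obtained from $V_{\mathbf i}$ by mutations. $L_T=(\lambda_{ij})$, $\lambda_{ij}=[T_i,T_j]-[T_j,T_i]$. To a reachable $T$ is attached the cluster $(X_{T_1},\dots,X_{T_r})$ of its quantum seed, elements of a skew field satisfying $X_{T_i}X_{T_j}=q^{\lambda_{ij}}X_{T_j}X_{T_i}$.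 For $R=T_1^{a_1}\oplus\cdots\oplus T_r^{a_r}$ ($a_i\in\mathbb N$) put $X_R=q^{\frac12\sum_{i>j}a_ia_j\lambda_{ij}}X_{T_1}^{a_1}\cdots X_{T_r}^{a_r}$ and $Y_R=q^{-[R,R]/2}X_R$. *)

theory Defs
  imports Main
begin

text \<open>Abstract rendering of the data attached to a reachable C_w-maximal rigid module
  T = T_0 + ... + T_(r-1) (indices 0..r-1).
  hm i j stands for [T_i, T_j] = dim Hom(T_i, T_j).
  A module R in add(T) is given by its multiplicity vector a (R = sum of T_i^(a i)).
  The formal square root q^(1/2) is an element v, so q = v^2.\<close>

text \<open>[R,S] for R = (+) T_i^(a i), S = (+) T_j^(b j): Hom is biadditive.\<close>
definition hom_dim :: "nat \<Rightarrow> (nat \<Rightarrow> nat \<Rightarrow> nat) \<Rightarrow> (nat \<Rightarrow> nat) \<Rightarrow> (nat \<Rightarrow> nat) \<Rightarrow> int" where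
  "hom_dim r hm a b = (\<Sum>i<r. \<Sum>j<r. int (a i) * int (b j) * int (hm i j))"

definition lam :: "(nat \<Rightarrow> nat \<Rightarrow> nat) \<Rightarrow> nat \<Rightarrow> nat \<Rightarrow> int" where
  "lam hm i j = int (hm i j) - int (hm j i)"

definition XR :: "nat \<Rightarrow> (nat \<Rightarrow> nat \<Rightarrow> nat) \<Rightarrow> 'a::division_ring \<Rightarrow> (nat \<Rightarrow> 'a) \<Rightarrow> (nat \<Rightarrow> nat) \<Rightarrow> 'a" where
  "XR r hm v X a =
     v powi (\<Sum>i<r. \<Sum>j<i. int (a i) * int (a j) * lam hm i j)
     * prod_list (map (\<lambda>i. X i ^ a i) [0..<r])"

definition YR :: "nat \<Rightarrow> (nat \<Rightarrow> nat \<Rightarrow> nat) \<Rightarrow> 'a::division_ring \<Rightarrow> (nat \<Rightarrow> 'a) \<Rightarrow> (nat \<Rightarrow> nat) \<Rightarrow> 'a" where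
  "YR r hm v X a = v powi (- hom_dim r hm a a) * XR r hm v X a"

end

theory Submission
  imports Defs
begin

text \<open>Up to central powers of \<open>v\<close>, \<open>Y_R Y_S\<close> is a product of two ordered monomials in
  the quasi-commuting \<open>X_i\<close>. Sorting it into the ordered monomial of \<open>R \<oplus> S\<close> moves each
  \<open>X_i^(a_i)\<close> past the \<open>X_j^(b_j)\<close> with \<open>j < i\<close>, at the cost of \<open>q^(\<Sum>_(i>j) a_i b_j \<lambda>_ij)\<close>.
  What remains is an identity of exponents, which follows from bilinearity of \<open>[-,-]\<close> and
  \<open>\<Sum>_(i>j) (a_i b_j - b_i a_j) \<lambda>_ij = [R,S] - [S,R]\<close>, the antisymmetry of \<open>\<lambda>\<close>.\<close>

lemma power_int_central:
  fixes v :: "'a::division_ring"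
  assumes central: "\<And>x. v * x = x * v"
  shows "v powi k * x = x * v powi k"
proof -
  have "inverse v * x = x * inverse v"
    by (rule mult_commute_imp_mult_inverse_commute) (simp add: central)
  then show ?thesis
    using central by (simp add: power_int_def power_commuting_commutes)
qed

lemma power_quasi_commute:
  fixes x y c :: "'a::monoid_mult"
  assumes xy: "x * y = c * y * x" and central: "\<And>z. c * z = z * c"
  shows "x ^ m * y ^ k = c ^ (m * k) * y ^ k * x ^ m"
proof -
  have c_power_central: "c ^ n * z = z * c ^ n" for n z
    using central by (rule power_commuting_commutes)
  have x_yk: "x * y ^ k = c ^ k * y ^ k * x" for k
  proof (induction k)
    case (Suc k)
    have "x * y ^ Suc k = c ^ k * y ^ k * (x * y)"
      by (metis Suc power_Suc2 mult.assoc)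
    also have "\<dots> = c ^ k * (y ^ k * c) * y * x"
      by (simp add: xy mult.assoc)
    also have "\<dots> = c ^ Suc k * y ^ Suc k * x"
      by (simp only: central[of "y ^ k", symmetric] power_Suc2 mult.assoc)
    finally show ?case .
  qed simp
  show ?thesis
  proof (induction m)
    case (Suc m)
    have "x ^ Suc m * y ^ k = x ^ m * (x * y ^ k)"
      by (simp only: power_Suc2 mult.assoc)
    also have "\<dots> = c ^ k * (x ^ m * y ^ k) * x"
      by (metis x_yk c_power_central mult.assoc)
    also have "\<dots> = c ^ (k + m * k) * y ^ k * (x ^ m * x)"
      by (simp only: Suc power_add mult.assoc)
    also have "\<dots> = c ^ (Suc m * k) * y ^ k * x ^ Suc m"
      by (simp only: power_Suc2 mult_Suc)
    finally show ?case .
  qed simp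
qed

definition ordered_monomial :: "(nat \<Rightarrow> 'a::monoid_mult) \<Rightarrow> (nat \<Rightarrow> nat) \<Rightarrow> nat \<Rightarrow> 'a" where
  "ordered_monomial X a n = prod_list (map (\<lambda>i. X i ^ a i) [0..<n])"

lemma ordered_monomial_0 [simp]: "ordered_monomial X a 0 = 1"
  by (simp add: ordered_monomial_def)

lemma ordered_monomial_Suc: "ordered_monomial X a (Suc n) = ordered_monomial X a n * X n ^ a n"
  by (simp add: ordered_monomial_def)

definition lam_form :: "nat \<Rightarrow> (nat \<Rightarrow> nat \<Rightarrow> nat) \<Rightarrow> (nat \<Rightarrow> nat) \<Rightarrow> (nat \<Rightarrow> nat) \<Rightarrow> int" where
  "lam_form n hm a b = (\<Sum>i<n. \<Sum>j<i. int (a i) * int (b j) * lam hm i j)"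

lemma hom_dim_add_left:
  "hom_dim n hm (\<lambda>i. a i + a' i) b = hom_dim n hm a b + hom_dim n hm a' b"
  by (simp add: hom_dim_def sum.distrib algebra_simps)

lemma hom_dim_add_right:
  "hom_dim n hm a (\<lambda>i. b i + b' i) = hom_dim n hm a b + hom_dim n hm a b'"
  by (simp add: hom_dim_def sum.distrib algebra_simps)

lemma lam_form_add_left:
  "lam_form n hm (\<lambda>i. a i + a' i) b = lam_form n hm a b + lam_form n hm a' b"
  by (simp add: lam_form_def sum.distrib algebra_simps)

lemma lam_form_add_right:
  "lam_form n hm a (\<lambda>i. b i + b' i) = lam_form n hm a b + lam_form n hm a b'"
  by (simp add: lam_form_def sum.distrib algebra_simps)

lemma lam_form_antisym:
  "lam_form n hm a b - lam_form n hm b a = hom_dim n hm a b - hom_dim n hm b a"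
proof (induction n)
  case (Suc n)
  then show ?case
    by (simp add: lam_form_def hom_dim_def lam_def sum.distrib sum_subtractf
        sum_distrib_left algebra_simps)
qed (simp add: lam_form_def hom_dim_def)

locale quasi_commuting_family =
  fixes r :: nat and hm :: "nat \<Rightarrow> nat \<Rightarrow> nat"
    and v :: "'a::division_ring" and X :: "nat \<Rightarrow> 'a"
  assumes v_nz: "v \<noteq> 0"
    and v_central: "\<And>x. v * x = x * v"
    and quasi_comm: "\<And>i j. i < r \<Longrightarrow> j < r \<Longrightarrow> X i * X j = (v\<^sup>2) powi (lam hm i j) * X j * X i"
begin

text \<open>Not usable as a plain simp rule (it loops for \<open>x = v powi j\<close>); it is always instantiated.\<close>
lemma v_powi_left_commute: "x * (v powi k * y) = v powi k * (x * y)"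
  by (metis power_int_central[OF v_central] mult.assoc)

lemma v_powi_add_mult: "v powi m * (v powi n * x) = v powi (m + n) * x"
  using v_nz by (simp add: power_int_add mult.assoc)

lemma X_power_commute:
  assumes "i < r" "j < r"
  shows "X i ^ m * X j ^ k = v powi (2 * (int m * int k * lam hm i j)) * X j ^ k * X i ^ m"
proof -
  have "X i ^ m * X j ^ k = ((v\<^sup>2) powi lam hm i j) ^ (m * k) * X j ^ k * X i ^ m"
    using quasi_comm[OF assms] by (rule power_quasi_commute)
      (intro power_int_central power_commuting_commutes v_central)
  then show ?thesis
    by (simp add: power_int_power' power_int_power mult_ac)
qed

lemma X_power_monomial_commute:
  assumes "i < r" "n \<le> r"
  shows "X i ^ m * ordered_monomial X b n
    = v powi (2 * (\<Sum>j<n. int m * int (b j) * lam hm i j)) * ordered_monomial X b n * X i ^ m"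
  using assms(2)
proof (induction n)
  case (Suc n)
  let ?e = "2 * (\<Sum>j<n. int m * int (b j) * lam hm i j)"
  and ?f = "2 * (int m * int (b n) * lam hm i n)"
  have IH: "X i ^ m * ordered_monomial X b n = v powi ?e * ordered_monomial X b n * X i ^ m"
    using Suc by simp
  have "X i ^ m * ordered_monomial X b (Suc n)
      = v powi ?e * (ordered_monomial X b n * (X i ^ m * X n ^ b n))"
    by (simp only: ordered_monomial_Suc IH mult.assoc[symmetric])
  also have "\<dots> = v powi ?e * (v powi ?f * (ordered_monomial X b n * X n ^ b n * X i ^ m))"
    using Suc.prems
    by (simp only: X_power_commute[OF assms(1)] v_powi_left_commute[of "ordered_monomial X b n"]
        mult.assoc)
  also have "\<dots> = v powi (2 * (\<Sum>j<Suc n. int m * int (b j) * lam hm i j))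
      * ordered_monomial X b (Suc n) * X i ^ m"
    by (simp add: v_powi_add_mult ordered_monomial_Suc algebra_simps)
  finally show ?case .
qed simp

lemma ordered_monomial_mult:
  assumes "n \<le> r"
  shows "ordered_monomial X a n * ordered_monomial X b n
    = v powi (2 * lam_form n hm a b) * ordered_monomial X (\<lambda>i. a i + b i) n"
  using assms
proof (induction n)
  case (Suc n)
  let ?e = "2 * (\<Sum>j<n. int (a n) * int (b j) * lam hm n j)"
  have "n < r" "n \<le> r" using Suc.prems by simp_all
  have IH: "ordered_monomial X a n * ordered_monomial X b n
      = v powi (2 * lam_form n hm a b) * ordered_monomial X (\<lambda>i. a i + b i) n"
    using Suc by simp
  have "ordered_monomial X a (Suc n) * ordered_monomial X b (Suc n)
      = ordered_monomial X a n * (X n ^ a n * ordered_monomial X b n) * X n ^ b n"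
    by (simp only: ordered_monomial_Suc mult.assoc)
  also have "\<dots> = v powi ?e * (ordered_monomial X a n * ordered_monomial X b n * (X n ^ a n * X n ^ b n))"
    unfolding X_power_monomial_commute[OF \<open>n < r\<close> \<open>n \<le> r\<close>]
    by (simp only: v_powi_left_commute[of "ordered_monomial X a n"] mult.assoc)
  also have "\<dots> = v powi ?e * (v powi (2 * lam_form n hm a b) * ordered_monomial X (\<lambda>i. a i + b i) (Suc n))"
    by (simp only: IH ordered_monomial_Suc power_add mult.assoc)
  also have "\<dots> = v powi (2 * lam_form (Suc n) hm a b) * ordered_monomial X (\<lambda>i. a i + b i) (Suc n)"
    by (simp add: v_powi_add_mult lam_form_def algebra_simps)
  finally show ?case .
qed (simp add: lam_form_def)

lemma YR_eq: "YR r hm v X c = v powi (lam_form r hm c c - hom_dim r hm c c) * ordered_monomial X c r"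
  by (simp add: YR_def XR_def ordered_monomial_def lam_form_def v_powi_add_mult)

lemma YR_mult:
  "YR r hm v X a * YR r hm v X b = (v\<^sup>2) powi (hom_dim r hm a b) * YR r hm v X (\<lambda>i. a i + b i)"
proof -
  let ?M = "ordered_monomial X (\<lambda>i. a i + b i) r"
  have "YR r hm v X a * YR r hm v X b
      = v powi (lam_form r hm a a - hom_dim r hm a a + (lam_form r hm b b - hom_dim r hm b b
          + 2 * lam_form r hm a b)) * ?M"
    unfolding YR_eq mult.assoc v_powi_left_commute[of "ordered_monomial X a r"]
    by (simp only: ordered_monomial_mult[OF order_refl] v_powi_add_mult)
  also have "lam_form r hm a a - hom_dim r hm a a + (lam_form r hm b b - hom_dim r hm b b
          + 2 * lam_form r hm a b)
      = 2 * hom_dim r hm a b + (lam_form r hm (\<lambda>i. a i + b i) (\<lambda>i. a i + b i)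
          - hom_dim r hm (\<lambda>i. a i + b i) (\<lambda>i. a i + b i))"
    using lam_form_antisym[of r hm a b]
    by (simp add: lam_form_add_left lam_form_add_right hom_dim_add_left hom_dim_add_right)
  finally show ?thesis
    by (simp only: YR_eq power_int_power v_powi_add_mult) simp
qed

end

theorem lemma10p4:
  fixes r :: nat and hm :: "nat \<Rightarrow> nat \<Rightarrow> nat"
    and v :: "'a::division_ring" and X :: "nat \<Rightarrow> 'a"
    and a b :: "nat \<Rightarrow> nat"
  assumes v_nz: "v \<noteq> 0"
    and v_central: "\<And>x. v * x = x * v"
    and quasi_comm: "\<And>i j. i < r \<Longrightarrow> j < r \<Longrightarrow> X i * X j = (v\<^sup>2) powi (lam hm i j) * X j * X i"
  shows "YR r hm v X a * YR r hm v X b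
         = (v\<^sup>2) powi (hom_dim r hm a b) * YR r hm v X (\<lambda>i. a i + b i)"
proof -
  interpret quasi_commuting_family r hm v X
    using assms by unfold_locales
  show ?thesis by (rule YR_mult)
qed

end
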